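(* Let $r,s_1,s_2\in\mathbb{N}_+$. Let $\boldsymbol B_0\in\mathbb{R}^{d_1\times d_2}$ be arbitrary and $\boldsymbol B_1,\dots,\boldsymbol B_r\in\{0,1\}^{d_1\times d_2}$ rank-1 matrices with $\langle\boldsymbol B_s,\boldsymbol B_{s'}\rangle=0$ for $s\ne s'$ and whose supports together involve at most $s_1$ rows and at most $s_2$ columns. Let $g_1,\dots,g_r:[0,1]\to\mathbb{R}$ be functions at least one of which is strictly monotonic. Draw $\pi\sim\mathrm{Unif}[0,1]$ and, given $\pi$, set $\boldsymbol X_\pi=\boldsymbol B_0+\sum_{s=1}^r g_s(\pi)\boldsymbol B_s$ (the noiseless case $\sigma=0$ of $\boldsymbol X_\pi=\boldsymbol B_0+\sum_s g_s(\pi)\boldsymbol B_s+\sigma\boldsymbol E$) and $Y_\pi\sim\mathrm{Bernoulli}(\pi)$ with $Y_\pi$ independent of $\boldsymbol X_\pi$ given $\pi$. Let $\mathbb{P}_{\boldsymbol X,Y}$ be the induced joint distribution of $(\boldsymbol X,Y)=(\boldsymbol X_\pi,Y_\pi)$, $\mathcal{X}=\{\boldsymbol X_\pi:\pi\in[0,1]\}$, and $f(\boldsymbol X)=\mathbb{E}(Y|\boldsymbol X)$ on $\mathcal{X}$. Then $f\in\mathcal F_{\mathrm{sgn}}(r,s_1,s_2)$.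
   Context: $\mathrm{sgn}(x)=1$ if $x>0$, $-1$ otherwise. $\Phi(r,s_1,s_2)=\{\boldsymbol X\mapsto\langle\boldsymbol X,\boldsymbol B\rangle+b:\mathrm{rank}(\boldsymbol B)\le r,\ \boldsymbol B\text{ has at most }s_1\text{ nonzero rows and }s_2\text{ nonzero columns},\ b\in\mathbb{R}\}$, with $\langle\boldsymbol X,\boldsymbol B\rangle=\mathrm{tr}(\boldsymbol X\boldsymbol B^T)$. $\mathcal F_{\mathrm{sgn}}(r,s_1,s_2)$ is the set of functions $f:\mathcal{X}\to[-1,1]$ such that for every level $\pi'\in[-1,1]$ there is $\phi\in\Phi(r,s_1,s_2)$ with $\mathrm{sgn}(f(\boldsymbol X)-\pi')=\mathrm{sgn}\,\phi(\boldsymbol X)$ for all $\boldsymbol X\in\mathcal{X}$. *)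

theory Defs
  imports "HOL-Analysis.Analysis" "HOL-Probability.Probability"
begin

text \<open>Sign convention of the paper: sgn x = 1 if x > 0, -1 otherwise.\<close>
definition sgnp :: "real \<Rightarrow> real" where
  "sgnp x = (if x > 0 then 1 else -1)"

definition minner :: "real^'c^'r \<Rightarrow> real^'c^'r \<Rightarrow> real" where
  "minner X B = (\<Sum>i\<in>UNIV. \<Sum>j\<in>UNIV. X $ i $ j * B $ i $ j)"

definition nz_rows :: "real^'c^'r \<Rightarrow> 'r set" where
  "nz_rows B = {i. \<exists>j. B $ i $ j \<noteq> 0}"

definition nz_cols :: "real^'c^'r \<Rightarrow> 'c set" where
  "nz_cols B = {j. \<exists>i. B $ i $ j \<noteq> 0}"

definition Phi :: "nat \<Rightarrow> nat \<Rightarrow> nat \<Rightarrow> (real^'c^'r \<Rightarrow> real) set" where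
  "Phi r s1 s2 = {\<phi>. \<exists>B b. rank B \<le> r \<and> card (nz_rows B) \<le> s1 \<and> card (nz_cols B) \<le> s2
                     \<and> \<phi> = (\<lambda>X. minner X B + b)}"

definition Fsgn :: "(real^'c^'r) set \<Rightarrow> nat \<Rightarrow> nat \<Rightarrow> nat \<Rightarrow> (real^'c^'r \<Rightarrow> real) set" where
  "Fsgn Xs r s1 s2 = {f. (\<forall>X\<in>Xs. f X \<in> {-1..1}) \<and>
      (\<forall>l\<in>{-1..1::real}. \<exists>\<phi>\<in>Phi r s1 s2. \<forall>X\<in>Xs. sgnp (f X - l) = sgnp (\<phi> X))}"

definition Xpi :: "(nat \<Rightarrow> real^'c^'r) \<Rightarrow> (nat \<Rightarrow> real \<Rightarrow> real) \<Rightarrow> nat \<Rightarrow> real \<Rightarrow> real^'c^'r" where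
  "Xpi B g r p = B 0 + (\<Sum>s\<in>{1..r}. g s p *\<^sub>R B s)"

text \<open>Regression function f(X) = E(Y | X): X determines pi (the pi in [0,1] with X_pi = X),
  and given pi, Y ~ Bernoulli(pi); so f(X) is the mean of Bernoulli(pi) for that pi.\<close>
definition regfun :: "(nat \<Rightarrow> real^'c^'r) \<Rightarrow> (nat \<Rightarrow> real \<Rightarrow> real) \<Rightarrow> nat \<Rightarrow> real^'c^'r \<Rightarrow> real" where
  "regfun B g r X = (let p = (THE p. p \<in> {0..1} \<and> Xpi B g r p = X) in
     measure_pmf.expectation (bernoulli_pmf p) (\<lambda>y. if y then 1 else 0))"

end

theory Submission
  imports Defs
begin

text \<open>Let \<open>g\<^sub>s\<^sub>0\<close> be the strictly monotone coefficient. Since the \<open>B\<^sub>s\<close> are mutually orthogonal,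
  \<open>\<langle>X\<^sub>\<pi>, B\<^sub>s\<^sub>0\<rangle> = \<langle>B\<^sub>0, B\<^sub>s\<^sub>0\<rangle> + g\<^sub>s\<^sub>0(\<pi>) \<parallel>B\<^sub>s\<^sub>0\<parallel>\<^sup>2\<close>, so after fixing the sign of \<open>B\<^sub>s\<^sub>0\<close> the
  linear functional \<open>\<langle>\<cdot>, \<plusminus>B\<^sub>s\<^sub>0\<rangle>\<close> is strictly increasing along the curve \<open>\<pi> \<mapsto> X\<^sub>\<pi>\<close>.
  Hence the curve is injective, \<open>f(X\<^sub>\<pi>) = \<pi>\<close>, and every superlevel set \<open>{\<pi> > l}\<close> of \<open>f\<close>
  is cut out by a half-space \<open>\<langle>X, \<plusminus>B\<^sub>s\<^sub>0\<rangle> > t\<close>, where \<open>\<plusminus>B\<^sub>s\<^sub>0\<close> has rank one and its support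
  lies in the joint support of the \<open>B\<^sub>s\<close>.\<close>

lemma minner_eq_inner: "minner X B = X \<bullet> B"
  unfolding minner_def inner_vec_def by simp

lemma rank_scaleR_le: "rank (c *\<^sub>R A) \<le> rank (A :: real^'n^'m)"
proof -
  have "c *\<^sub>R A = (c *\<^sub>R mat 1) ** A"
    by (metis matrix_mul_lid scalar_matrix_assoc)
  then show ?thesis
    by (metis rank_mul_le_right)
qed

lemma nz_rows_scaleR: "c \<noteq> 0 \<Longrightarrow> nz_rows (c *\<^sub>R A) = nz_rows A"
  by (simp add: nz_rows_def)

lemma nz_cols_scaleR: "c \<noteq> 0 \<Longrightarrow> nz_cols (c *\<^sub>R A) = nz_cols A"
  by (simp add: nz_cols_def)

lemma halfspace_in_Phi:
  assumes "rank A \<le> r" "card (nz_rows A) \<le> s1" "card (nz_cols A) \<le> s2"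
  shows "(\<lambda>X. X \<bullet> A - t) \<in> Phi r s1 s2"
  unfolding Phi_def minner_eq_inner using assms by force

lemma sgnp_eq_iff: "sgnp x = sgnp y \<longleftrightarrow> (0 < x \<longleftrightarrow> 0 < y)"
  by (simp add: sgnp_def)

lemma mem_FsgnI:
  assumes "\<forall>X\<in>Xs. f X \<in> {-1..1}"
    and "\<forall>l\<in>{-1..1}. \<exists>\<phi>\<in>Phi r s1 s2. \<forall>X\<in>Xs. l < f X \<longleftrightarrow> 0 < \<phi> X"
  shows "f \<in> Fsgn Xs r s1 s2"
  using assms unfolding Fsgn_def sgnp_eq_iff by simp

lemma strict_mono_on_signed:
  fixes h :: "'a::order \<Rightarrow> real"
  assumes "strict_mono_on S h \<or> strict_antimono_on S h"
  obtains \<sigma> :: real where "\<sigma> \<in> {1, -1}" "strict_mono_on S (\<lambda>x. \<sigma> * h x)"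
  using assms that[of 1] that[of "-1"] by (auto simp: monotone_on_def)

lemma strict_mono_on_interval_threshold:
  fixes h :: "real \<Rightarrow> real"
  assumes "strict_mono_on {a..b} h"
  obtains t where "\<forall>p\<in>{a..b}. l < p \<longleftrightarrow> t < h p"
proof (cases "l < a")
  case True
  have "h a - 1 < h p" if "p \<in> {a..b}" for p
    using that strict_mono_onD[OF assms, of a p] by (cases "a = p") auto
  with True show ?thesis
    by (intro that[of "h a - 1"]) auto
next
  case False
  then have min_mem: "min l b \<in> {a..b}" if "p \<in> {a..b}" for p
    using that by auto
  have "l < p \<longleftrightarrow> h (min l b) < h p" if p: "p \<in> {a..b}" for p
    using strict_mono_onD[OF assms min_mem[OF p] p] strict_mono_onD[OF assms p min_mem[OF p]] p
    by (cases "p < min l b"; cases "p = min l b") auto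
  then show ?thesis
    by (intro that) blast
qed

lemma inner_Xpi:
  assumes "s0 \<in> {1..r}" "\<forall>s\<in>{1..r}. s \<noteq> s0 \<longrightarrow> B s \<bullet> B s0 = 0"
  shows "Xpi B g r p \<bullet> B s0 = B 0 \<bullet> B s0 + g s0 p * (B s0 \<bullet> B s0)"
proof -
  have "(\<Sum>s\<in>{1..r}. g s p * (B s \<bullet> B s0)) = g s0 p * (B s0 \<bullet> B s0)"
    using assms by (subst sum.remove[of _ s0]) (auto intro!: sum.neutral)
  then show ?thesis
    by (simp add: Xpi_def inner_add_left inner_sum_left)
qed

lemma strict_mono_on_inner_Xpi:
  assumes "s0 \<in> {1..r}" "\<forall>s\<in>{1..r}. s \<noteq> s0 \<longrightarrow> B s \<bullet> B s0 = 0"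
    and "B s0 \<noteq> 0" and "strict_mono_on S (\<lambda>p. \<sigma> * g s0 p)"
  shows "strict_mono_on S (\<lambda>p. Xpi B g r p \<bullet> (\<sigma> *\<^sub>R B s0))"
proof (rule strict_mono_onI)
  fix p q assume "p \<in> S" "q \<in> S" "p < q"
  then have "\<sigma> * g s0 p * (B s0 \<bullet> B s0) < \<sigma> * g s0 q * (B s0 \<bullet> B s0)"
    using assms(3) strict_mono_onD[OF assms(4)] by (simp add: mult_strict_right_mono)
  then show "Xpi B g r p \<bullet> (\<sigma> *\<^sub>R B s0) < Xpi B g r q \<bullet> (\<sigma> *\<^sub>R B s0)"
    using inner_Xpi[OF assms(1,2)] by (simp add: algebra_simps)
qed

lemma regfun_Xpi:
  assumes "inj_on (Xpi B g r) {0..1}" "p \<in> {0..1}"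
  shows "regfun B g r (Xpi B g r p) = p"
proof -
  have "(THE q. q \<in> {0..1} \<and> Xpi B g r q = Xpi B g r p) = p"
    using assms by (intro the_equality) (auto dest: inj_onD)
  then show ?thesis
    using assms(2) by (simp add: regfun_def)
qed

lemma regfun_mem_Fsgn:
  assumes "rank A \<le> r" "card (nz_rows A) \<le> s1" "card (nz_cols A) \<le> s2"
    and mono: "strict_mono_on {0..1} (\<lambda>p. Xpi B g r p \<bullet> A)"
  shows "regfun B g r \<in> Fsgn (Xpi B g r ` {0..1}) r s1 s2"
proof (rule mem_FsgnI)
  have "inj_on ((\<lambda>X. X \<bullet> A) \<circ> Xpi B g r) {0..1}"
    using mono by (simp add: o_def strict_mono_on_imp_inj_on)
  then have reg: "regfun B g r (Xpi B g r p) = p" if "p \<in> {0..1}" for p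
    by (rule regfun_Xpi[OF inj_on_imageI2 that])
  then show "\<forall>X\<in>Xpi B g r ` {0..1}. regfun B g r X \<in> {-1..1}"
    by auto
  show "\<forall>l\<in>{-1..1}. \<exists>\<phi>\<in>Phi r s1 s2. \<forall>X\<in>Xpi B g r ` {0..1}. l < regfun B g r X \<longleftrightarrow> 0 < \<phi> X"
  proof
    fix l :: real
    obtain t where "\<forall>p\<in>{0..1}. l < p \<longleftrightarrow> t < Xpi B g r p \<bullet> A"
      using strict_mono_on_interval_threshold[OF mono] .
    then have "\<forall>X\<in>Xpi B g r ` {0..1}. l < regfun B g r X \<longleftrightarrow> 0 < X \<bullet> A - t"
      using reg by auto
    then show "\<exists>\<phi>\<in>Phi r s1 s2. \<forall>X\<in>Xpi B g r ` {0..1}. l < regfun B g r X \<longleftrightarrow> 0 < \<phi> X"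
      by (intro bexI[OF _ halfspace_in_Phi[OF assms(1-3)]])
  qed
qed

theorem proposition4:
  fixes B :: "nat \<Rightarrow> real^'c^'r" and g :: "nat \<Rightarrow> real \<Rightarrow> real"
    and r s1 s2 :: nat
  assumes "r \<ge> 1" "s1 \<ge> 1" "s2 \<ge> 1"
    and "\<forall>s\<in>{1..r}. \<forall>i j. B s $ i $ j \<in> {0, 1}"
    and "\<forall>s\<in>{1..r}. rank (B s) = 1"
    and "\<forall>s\<in>{1..r}. \<forall>s'\<in>{1..r}. s \<noteq> s' \<longrightarrow> minner (B s) (B s') = 0"
    and "card (\<Union>s\<in>{1..r}. nz_rows (B s)) \<le> s1"
    and "card (\<Union>s\<in>{1..r}. nz_cols (B s)) \<le> s2"
    and "\<exists>s\<in>{1..r}. strict_mono_on {0..1} (g s) \<or> strict_antimono_on {0..1} (g s)"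
  shows "regfun B g r \<in> Fsgn (Xpi B g r ` {0..1}) r s1 s2"
proof -
  obtain s0 where s0: "s0 \<in> {1..r}"
    and monotone: "strict_mono_on {0..1} (g s0) \<or> strict_antimono_on {0..1} (g s0)"
    using assms(9) by blast
  from monotone obtain \<sigma> where \<sigma>: "\<sigma> \<in> {1, -1}" "strict_mono_on {0..1} (\<lambda>p. \<sigma> * g s0 p)"
    by (rule strict_mono_on_signed)
  have orthogonal: "\<forall>s\<in>{1..r}. s \<noteq> s0 \<longrightarrow> B s \<bullet> B s0 = 0"
    using assms(6) s0 by (simp add: minner_eq_inner)
  have nonzero: "B s0 \<noteq> 0"
    using assms(5) s0 by fastforce
  have "\<sigma> \<noteq> 0"
    using \<sigma>(1) by auto
  show ?thesis
  proof (rule regfun_mem_Fsgn)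
    show "rank (\<sigma> *\<^sub>R B s0) \<le> r"
      using rank_scaleR_le[of \<sigma> "B s0"] assms(1,5) s0 by simp
    show "card (nz_rows (\<sigma> *\<^sub>R B s0)) \<le> s1"
      unfolding nz_rows_scaleR[OF \<open>\<sigma> \<noteq> 0\<close>]
      by (rule order_trans[OF card_mono[OF finite UN_upper[OF s0]] assms(7)])
    show "card (nz_cols (\<sigma> *\<^sub>R B s0)) \<le> s2"
      unfolding nz_cols_scaleR[OF \<open>\<sigma> \<noteq> 0\<close>]
      by (rule order_trans[OF card_mono[OF finite UN_upper[OF s0]] assms(8)])
    show "strict_mono_on {0..1} (\<lambda>p. Xpi B g r p \<bullet> (\<sigma> *\<^sub>R B s0))"
      by (rule strict_mono_on_inner_Xpi[where g = g, OF s0 orthogonal nonzero \<sigma>(2)])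
  qed
qed

end
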